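(* Let $V$ be a finite vocabulary, $U\in\mathbb{R}^{|V|\times d}$, $u_t=U^\top e_t$, and let $r\in\mathbb{R}^d$ be the unsteered final representation of a query $q$, with $P_\theta(t\mid q)=\mathrm{softmax}(Ur)_t$. Let $c\in V$ be the correct answer token, $P_0=P_\theta(c\mid q)<1$. Let $S\subseteq V$ with $c\in S$ and $|S|=T\ge 3$, and define $\epsilon\in[0,1)$ by $\sum_{i\in S\setminus\{c\}}P_\theta(i\mid q)=(1-\epsilon)(1-P_0)$ (assume this sum is positive). Let $r_e\neq 0$ and let the steered distribution be $P_{\theta,r_e}(t\mid q)=\mathrm{softmax}(U(r+d))_t$ where $d=\lambda|r_e|\,v$, $\lambda>0$, and $v$ is a random unit vector such that the random variables $X_i=\langle v,u_i\rangle$, $i\in S$, are i.i.d. with a continuous distribution of variance $\sigma^2>0$. Define $I_\pm=\{i\in S\setminus\{c\}:\pm(X_i-X_c)>0\}$, $P_\pm=\sum_{i\in I_\pm}P_\theta(i\mid q)$, and when $I_\pm\neq\emptyset$, $c_\pm=\frac{1}{P_\pm}\sum_{i\in I_\pm}P_\theta(i\mid q)(X_i-X_c)$; set $$\alpha=\frac{\min\{P_+,P_-\}}{(1-P_0)(1-\epsilon)},\qquad \beta=\frac{\min\{|c_-|,c_+\}}{\sigma}.$$ Then with probability at least $1-\frac{2}{T}$ (over the randomness of $v$), both $I_+$ and $I_-$ are nonempty, $\alpha>0$, $\beta>0$, and $$P_{\theta,r_e}(c\mid q)\le\frac{P_0}{P_0+(1-P_0)\,\alpha(1-\epsilon)\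big(1+\tfrac{\lambda^2\sigma^2\beta^2}{2}r_e^2\big)}.$$
   Context: Helpfulness of a model on a query $q$ with correct answer $c$ is the probability $P(c\mid q)$ the model assigns to the correct answer. Steering with coefficient $r_e$ changes the final hidden representation by $d$ with $|d|=\lambda|r_e|$; the direction of $d$ is modeled as random relative to the unembeddings of the $T$ tokens in $S$ (typically the highest-probability tokens, carrying most of the mass). *)

theory Defs
  imports "HOL-Probability.Probability"
begin

definition softmax :: "real ^ 'v::finite \<Rightarrow> 'v \<Rightarrow> real" where
  "softmax z t = exp (z $ t) / (\<Sum>s\<in>UNIV. exp (z $ s))"

definition Iplus :: "'v set \<Rightarrow> 'v \<Rightarrow> ('v \<Rightarrow> real) \<Rightarrow> 'v set" where
  "Iplus S c X = {i \<in> S - {c}. X i - X c > 0}"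

definition Iminus :: "'v set \<Rightarrow> 'v \<Rightarrow> ('v \<Rightarrow> real) \<Rightarrow> 'v set" where
  "Iminus S c X = {i \<in> S - {c}. X i - X c < 0}"

definition Pmass :: "('v \<Rightarrow> real) \<Rightarrow> 'v set \<Rightarrow> real" where
  "Pmass p I = (\<Sum>i\<in>I. p i)"

text \<open>Weighted mean of X_i - X_c over I (meaningful when I is nonempty).\<close>
definition cmean :: "('v \<Rightarrow> real) \<Rightarrow> ('v \<Rightarrow> real) \<Rightarrow> 'v \<Rightarrow> 'v set \<Rightarrow> real" where
  "cmean p X c I = (1 / Pmass p I) * (\<Sum>i\<in>I. p i * (X i - X c))"

end

theory Submission
  imports Defs
begin

(* Steering by d = k v with k = lam |re| adds k <v, u_t> to every logit, so the steered probability
   of c is P c / (sum_t P t exp (k (X_t - X_c))).  Dropping all tokens outside {c} and I+ and applying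
   Jensen's inequality for exp on I+ bounds the denominator from below by
   P c + P+ exp (k c+) >= P c + P+ (1 + k^2 c+^2 / 2).
   Randomness only enters through the requirement that I+ and I- be nonempty.  I+ is empty exactly
   when X_c is the maximum of the i.i.d. family (X_i) over S; by exchangeability, and since ties
   have probability zero for a continuous distribution, this happens with probability 1/T.
   The same holds for I- and the minimum. *)

lemma softmax_pos: "0 < softmax z t"
  unfolding softmax_def by (intro divide_pos_pos) (auto intro!: sum_pos)

lemma softmax_add:
  "softmax (z + y) c = softmax z c / (\<Sum>t\<in>UNIV. softmax z t * exp (y $ t - y $ c))"
proof -
  define Z where "Z = (\<Sum>t\<in>UNIV. exp (z $ t))"
  define Z' where "Z' = (\<Sum>t\<in>UNIV. exp (z $ t + y $ t))"
  have pos: "Z > 0" "Z' > 0" unfolding Z_def Z'_def by (auto intro!: sum_pos)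
  have "(\<Sum>t\<in>UNIV. softmax z t * exp (y $ t - y $ c)) = Z' / (Z * exp (y $ c))"
    unfolding softmax_def Z_def[symmetric] Z'_def
    by (simp add: exp_diff exp_add sum_divide_distrib)
  moreover have "softmax z c / (Z' / (Z * exp (y $ c))) = exp (z $ c + y $ c) / Z'"
    unfolding softmax_def Z_def[symmetric] using pos by (simp add: exp_add field_simps)
  ultimately show ?thesis
    unfolding Z'_def by (simp add: softmax_def)
qed

lemma softmax_steer:
  fixes U :: "real ^ 'd::finite ^ 'v::finite"
  shows "softmax (U *v (r + k *\<^sub>R w)) c =
    softmax (U *v r) c / (\<Sum>t\<in>UNIV. softmax (U *v r) t * exp (k * (w \<bullet> U $ t - w \<bullet> U $ c)))"
proof -
  have "U *v (r + k *\<^sub>R w) = U *v r + k *\<^sub>R (U *v w)"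
    by (simp add: matrix_vector_right_distrib matrix_vector_mult_scaleR)
  then show ?thesis
    by (simp add: softmax_add matrix_vector_mul_component inner_commute right_diff_distrib)
qed

lemma sum_mult_exp_ge:
  fixes p y :: "'i \<Rightarrow> real"
  assumes "finite I" "\<forall>i\<in>I. 0 \<le> p i" "0 < sum p I"
  shows "sum p I * exp ((\<Sum>i\<in>I. p i * y i) / sum p I) \<le> (\<Sum>i\<in>I. p i * exp (y i))"
proof -
  let ?a = "\<lambda>i. p i / sum p I"
  have "I \<noteq> {}" using assms(3) by auto
  have "exp (\<Sum>i\<in>I. ?a i * y i) \<le> (\<Sum>i\<in>I. ?a i * exp (y i))"
    using convex_on_sum[OF assms(1) \<open>I \<noteq> {}\<close> exp_convex, of ?a y] assms
    by (auto simp: sum_divide_distrib[symmetric])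
  with assms(3) show ?thesis
    by (simp add: sum_divide_distrib[symmetric] field_simps)
qed

lemma Pmass_pos: "\<forall>t. 0 < p t \<Longrightarrow> finite I \<Longrightarrow> I \<noteq> {} \<Longrightarrow> 0 < Pmass p I"
  unfolding Pmass_def by (intro sum_pos) auto

lemma cmean_Iplus_pos:
  fixes p X :: "'v::finite \<Rightarrow> real"
  assumes "\<forall>t. 0 < p t" "Iplus S c X \<noteq> {}"
  shows "0 < cmean p X c (Iplus S c X)"
proof -
  have "0 < (\<Sum>i\<in>Iplus S c X. p i * (X i - X c))"
    using assms by (intro sum_pos) (auto simp: Iplus_def)
  then show ?thesis using Pmass_pos[OF assms(1) _ assms(2)] unfolding cmean_def by simp
qed

lemma cmean_Iminus_neg:
  fixes p X :: "'v::finite \<Rightarrow> real"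
  assumes "\<forall>t. 0 < p t" "Iminus S c X \<noteq> {}"
  shows "cmean p X c (Iminus S c X) < 0"
proof -
  have "0 < (\<Sum>i\<in>Iminus S c X. - (p i * (X i - X c)))"
    using assms by (intro sum_pos) (auto simp: Iminus_def mult_pos_neg)
  then show ?thesis
    using Pmass_pos[OF assms(1) _ assms(2)] unfolding cmean_def by (simp add: sum_negf divide_neg_pos)
qed

lemma Pmass_exp_cmean_le:
  fixes p X :: "'v \<Rightarrow> real"
  assumes "finite I" "\<forall>i. 0 < p i" "I \<noteq> {}"
  shows "Pmass p I * exp (k * cmean p X c I) \<le> (\<Sum>i\<in>I. p i * exp (k * (X i - X c)))"
proof -
  have "0 < Pmass p I" by (rule Pmass_pos[OF assms(2,1,3)])
  moreover have "k * cmean p X c I = (\<Sum>i\<in>I. p i * (k * (X i - X c))) / Pmass p I"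
    unfolding cmean_def by (simp add: mult.left_commute[of _ k] sum_distrib_left[symmetric])
  ultimately show ?thesis
    using sum_mult_exp_ge[OF assms(1), of p] assms(2) unfolding Pmass_def by (simp add: less_imp_le)
qed

text \<open>Only the terms of \<open>c\<close> and of \<open>I\<^sub>+\<close> are kept; on \<open>I\<^sub>+\<close> the exponent is
  nonnegative, where \<open>exp x \<ge> 1 + x\<^sup>2/2\<close>.\<close>
lemma sum_exp_ge_Iplus:
  fixes P X :: "'v::finite \<Rightarrow> real"
  assumes P: "\<forall>t. 0 < P t" and k: "0 \<le> k" and ne: "Iplus S c X \<noteq> {}"
  shows "P c + Pmass P (Iplus S c X) * (1 + (k * cmean P X c (Iplus S c X))\<^sup>2 / 2)
    \<le> (\<Sum>t\<in>UNIV. P t * exp (k * (X t - X c)))"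
proof -
  define Ip where "Ip = Iplus S c X"
  define f where "f t = P t * exp (k * (X t - X c))" for t
  have "0 \<le> k * cmean P X c Ip"
    using cmean_Iplus_pos[OF P ne] k unfolding Ip_def by simp
  then have "1 + (k * cmean P X c Ip)\<^sup>2 / 2 \<le> exp (k * cmean P X c Ip)"
    using exp_lower_Taylor_quadratic[of "k * cmean P X c Ip"] by linarith
  moreover have "0 < Pmass P Ip" using Pmass_pos[OF P _ ne] unfolding Ip_def by simp
  ultimately have "Pmass P Ip * (1 + (k * cmean P X c Ip)\<^sup>2 / 2) \<le> Pmass P Ip * exp (k * cmean P X c Ip)"
    by simp
  also have "\<dots> \<le> (\<Sum>t\<in>Ip. f t)"
    unfolding f_def by (rule Pmass_exp_cmean_le) (use P ne in \<open>auto simp: Ip_def\<close>)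
  finally have "Pmass P Ip * (1 + (k * cmean P X c Ip)\<^sup>2 / 2) \<le> (\<Sum>t\<in>Ip. f t)" .
  moreover have "f c + (\<Sum>t\<in>Ip. f t) = (\<Sum>t\<in>insert c Ip. f t)"
    by (simp add: Ip_def Iplus_def)
  moreover have "(\<Sum>t\<in>insert c Ip. f t) \<le> (\<Sum>t\<in>UNIV. f t)"
    using P by (intro sum_mono2) (auto simp: f_def less_imp_le)
  ultimately show ?thesis unfolding f_def Ip_def by simp
qed

lemma steered_softmax_le:
  fixes U :: "real ^ 'd::finite ^ 'v::finite" and r w :: "real ^ 'd" and c :: 'v
  defines "P \<equiv> softmax (U *v r)" and "X \<equiv> \<lambda>i. w \<bullet> U $ i"
  assumes k: "0 \<le> k" and ne: "Iplus S c X \<noteq> {}"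
  shows "softmax (U *v (r + k *\<^sub>R w)) c \<le>
    P c / (P c + min (Pmass P (Iplus S c X)) (Pmass P (Iminus S c X)) *
      (1 + (k * min \<bar>cmean P X c (Iminus S c X)\<bar> (cmean P X c (Iplus S c X)))\<^sup>2 / 2))"
proof -
  define Ip where "Ip = Iplus S c X"
  define cm where "cm = min \<bar>cmean P X c (Iminus S c X)\<bar> (cmean P X c Ip)"
  have P: "\<forall>t. 0 < P t" unfolding P_def by (simp add: softmax_pos)
  have cp: "0 < cmean P X c Ip" unfolding Ip_def by (rule cmean_Iplus_pos[OF P ne])
  have "0 < Pmass P Ip" using Pmass_pos[OF P _ ne] unfolding Ip_def by simp
  have "(k * cm)\<^sup>2 \<le> (k * cmean P X c Ip)\<^sup>2"
    using cp k by (intro power_mono mult_left_mono) (auto simp: cm_def)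
  then have "min (Pmass P Ip) (Pmass P (Iminus S c X)) * (1 + (k * cm)\<^sup>2 / 2)
      \<le> Pmass P Ip * (1 + (k * cmean P X c Ip)\<^sup>2 / 2)"
    using \<open>0 < Pmass P Ip\<close> by (intro mult_mono) auto
  also have "P c + \<dots> \<le> (\<Sum>t\<in>UNIV. P t * exp (k * (X t - X c)))"
    unfolding Ip_def by (rule sum_exp_ge_Iplus[OF P k ne])
  finally have den: "P c + min (Pmass P Ip) (Pmass P (Iminus S c X)) * (1 + (k * cm)\<^sup>2 / 2)
      \<le> (\<Sum>t\<in>UNIV. P t * exp (k * (X t - X c)))" by simp
  have "0 < P c + min (Pmass P Ip) (Pmass P (Iminus S c X)) * (1 + (k * cm)\<^sup>2 / 2)"
    using P unfolding Pmass_def by (intro add_pos_nonneg mult_nonneg_nonneg)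
      (auto intro!: sum_nonneg simp: less_imp_le)
  moreover have "softmax (U *v (r + k *\<^sub>R w)) c = P c / (\<Sum>t\<in>UNIV. P t * exp (k * (X t - X c)))"
    unfolding P_def X_def by (rule softmax_steer)
  ultimately show ?thesis
    using den P unfolding Ip_def cm_def by (simp add: frac_le less_imp_le)
qed

lemma (in prob_space) indep_sets_reindex:
  assumes ind: "indep_sets F I" and bij: "bij_betw \<sigma> J I"
  shows "indep_sets (\<lambda>j. F (\<sigma> j)) J"
proof (rule indep_setsI)
  show "F (\<sigma> j) \<subseteq> events" if "j \<in> J" for j
    using that ind bij by (auto simp: indep_sets_def bij_betw_def)
next
  fix A K assume K: "K \<noteq> {}" "K \<subseteq> J" "finite K" and A: "\<forall>k\<in>K. A k \<in> F (\<sigma> k)"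
  have inj: "inj_on \<sigma> K" using bij K(2) by (auto simp: bij_betw_def intro: inj_on_subset)
  define A' where "A' = A \<circ> the_inv_into K \<sigma>"
  have A'\<sigma>: "A' (\<sigma> k) = A k" if "k \<in> K" for k
    unfolding A'_def using the_inv_into_f_f[OF inj that] by simp
  have "prob (\<Inter>i\<in>\<sigma> ` K. A' i) = (\<Prod>i\<in>\<sigma> ` K. prob (A' i))"
  proof (rule indep_setsD[OF ind])
    show "\<sigma> ` K \<subseteq> I" using bij K(2) by (auto simp: bij_betw_def)
    show "\<forall>i\<in>\<sigma> ` K. A' i \<in> F i" using A A'\<sigma> by auto
  qed (use K in auto)
  also have "\<dots> = (\<Prod>k\<in>K. prob (A k))"
    using A'\<sigma> by (simp add: prod.reindex[OF inj])
  moreover have "(\<Inter>i\<in>\<sigma> ` K. A' i) = (\<Inter>k\<in>K. A k)" using A'\<sigma> by auto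
  ultimately show "prob (\<Inter>k\<in>K. A k) = (\<Prod>k\<in>K. prob (A k))" by simp
qed

lemma (in prob_space) indep_vars_reindex:
  assumes "indep_vars M' X I" and "bij_betw \<sigma> J I"
  shows "indep_vars (\<lambda>j. M' (\<sigma> j)) (\<lambda>j. X (\<sigma> j)) J"
  using assms indep_sets_reindex[of "\<lambda>i. {X i -` A \<inter> space M | A. A \<in> sets (M' i)}" I \<sigma> J]
  unfolding indep_vars_def2 bij_betw_def by auto

lemma (in prob_space) distr_iid_eq_PiM:
  assumes "indep_vars (\<lambda>_. N) Y S" "S \<noteq> {}" "\<forall>i\<in>S. distr M N (Y i) = \<mu>"
  shows "distr M (\<Pi>\<^sub>M i\<in>S. N) (\<lambda>\<omega>. \<lambda>i\<in>S. Y i \<omega>) = (\<Pi>\<^sub>M i\<in>S. \<mu>)"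
proof -
  have "\<And>i. i \<in> S \<Longrightarrow> random_variable N (Y i)"
    using assms(1) unfolding indep_vars_def by auto
  then have "distr M (\<Pi>\<^sub>M i\<in>S. N) (\<lambda>\<omega>. \<lambda>i\<in>S. Y i \<omega>) = (\<Pi>\<^sub>M i\<in>S. distr M N (Y i))"
    using indep_vars_iff_distr_eq_PiM'[OF assms(2), where M'="\<lambda>_. N" and X=Y] assms(1) by simp
  also have "\<dots> = (\<Pi>\<^sub>M i\<in>S. \<mu>)" by (rule PiM_cong) (use assms(3) in auto)
  finally show ?thesis .
qed

lemma (in prob_space) distr_iid_permute:
  assumes ind: "indep_vars (\<lambda>_. N) Y S" and dist: "\<forall>i\<in>S. distr M N (Y i) = \<mu>"
    and bij: "bij_betw \<sigma> S S"
  shows "distr M (\<Pi>\<^sub>M i\<in>S. N) (\<lambda>\<omega>. \<lambda>i\<in>S. Y (\<sigma> i) \<omega>) = distr M (\<Pi>\<^sub>M i\<in>S. N) (\<lambda>\<omega>. \<lambda>i\<in>S. Y i \<omega>)"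
proof (cases "S = {}")
  case False
  have "indep_vars (\<lambda>_. N) (\<lambda>i. Y (\<sigma> i)) S" using indep_vars_reindex[OF ind bij] by simp
  moreover have "\<forall>i\<in>S. distr M N (Y (\<sigma> i)) = \<mu>" using dist bij by (auto simp: bij_betw_def)
  ultimately have "distr M (\<Pi>\<^sub>M i\<in>S. N) (\<lambda>\<omega>. \<lambda>i\<in>S. Y (\<sigma> i) \<omega>) = (\<Pi>\<^sub>M i\<in>S. \<mu>)"
    by (rule distr_iid_eq_PiM[OF _ False])
  then show ?thesis using distr_iid_eq_PiM[OF ind False dist] by simp
qed (simp add: restrict_def)

lemma (in prob_space) prob_strict_max_eq:
  fixes Y :: "'i \<Rightarrow> 'a \<Rightarrow> real"
  assumes ind: "indep_vars (\<lambda>_. borel) Y S" and fin: "finite S" and c: "c \<in> S" and j: "j \<in> S"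
    and dist: "\<forall>i\<in>S. distr M borel (Y i) = distr M borel (Y c)"
  shows "prob {\<omega>\<in>space M. \<forall>i\<in>S-{j}. Y i \<omega> < Y j \<omega>} =
         prob {\<omega>\<in>space M. \<forall>i\<in>S-{c}. Y i \<omega> < Y c \<omega>}"
proof -
  define \<sigma> where "\<sigma> = Transposition.transpose c j"
  define N where "N = (\<Pi>\<^sub>M i\<in>S. (borel :: real measure))"
  define B where "B = {x\<in>space N. \<forall>i\<in>S-{c}. x i < x c}"
  have bij: "bij_betw \<sigma> S S" using c j by (simp add: \<sigma>_def)
  have \<sigma>_image: "\<sigma> ` (S - {c}) = S - {j}" "\<sigma> c = j"
    using c j by (auto simp: \<sigma>_def Transposition.transpose_def)
  have rv: "random_variable borel (Y i)" if "i \<in> S" for i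
    using ind that unfolding indep_vars_def by auto
  have B: "B \<in> sets N"
  proof -
    have "Measurable.pred N (\<lambda>x. \<forall>i\<in>S-{c}. x i < x c)"
      unfolding N_def
    proof (rule pred_intros_finite)
      fix i assume "i \<in> S - {c}"
      then have [measurable]: "(\<lambda>x. x i) \<in> borel_measurable (\<Pi>\<^sub>M i\<in>S. (borel :: real measure))"
        by (intro measurable_component_singleton) auto
      have [measurable]: "(\<lambda>x. x c) \<in> borel_measurable (\<Pi>\<^sub>M i\<in>S. (borel :: real measure))"
        using c by (intro measurable_component_singleton) auto
      show "Measurable.pred (\<Pi>\<^sub>M i\<in>S. (borel :: real measure)) (\<lambda>x. x i < x c)"
        by measurable
    qed (use fin in simp)
    then show ?thesis unfolding B_def by (simp add: pred_def)
  qed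
  have preimage: "(\<lambda>\<omega>. \<lambda>i\<in>S. Z i \<omega>) -` B \<inter> space M = {\<omega>\<in>space M. \<forall>i\<in>S-{c}. Z i \<omega> < Z c \<omega>}"
    for Z :: "'i \<Rightarrow> 'a \<Rightarrow> real"
    unfolding B_def N_def using c by (auto simp: space_PiM)
  have "prob {\<omega>\<in>space M. \<forall>i\<in>S-{c}. Y (\<sigma> i) \<omega> < Y (\<sigma> c) \<omega>}
      = measure (distr M N (\<lambda>\<omega>. \<lambda>i\<in>S. Y (\<sigma> i) \<omega>)) B"
  proof (subst measure_distr)
    show "(\<lambda>\<omega>. \<lambda>i\<in>S. Y (\<sigma> i) \<omega>) \<in> measurable M N"
      unfolding N_def using rv bij by (intro measurable_restrict) (auto simp: bij_betw_def)
  qed (use B preimage in auto)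
  also have "\<dots> = measure (distr M N (\<lambda>\<omega>. \<lambda>i\<in>S. Y i \<omega>)) B"
    unfolding N_def using distr_iid_permute[OF ind dist bij] by simp
  also have "\<dots> = prob {\<omega>\<in>space M. \<forall>i\<in>S-{c}. Y i \<omega> < Y c \<omega>}"
  proof (subst measure_distr)
    show "(\<lambda>\<omega>. \<lambda>i\<in>S. Y i \<omega>) \<in> measurable M N"
      unfolding N_def using rv by (intro measurable_restrict) auto
  qed (use B preimage in auto)
  moreover have "(\<forall>i\<in>S-{c}. Y (\<sigma> i) \<omega> < Y (\<sigma> c) \<omega>) \<longleftrightarrow> (\<forall>i\<in>S-{j}. Y i \<omega> < Y j \<omega>)" for \<omega>
    using \<sigma>_image Ball_image_comp[where f=\<sigma> and A="S - {c}" and g="\<lambda>i. Y i \<omega> < Y j \<omega>"] by (simp add: comp_def)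
  ultimately show ?thesis by simp
qed

lemma (in prob_space) indep_var_of_indep_vars:
  assumes "indep_vars M' Y S" "i \<in> S" "j \<in> S" "i \<noteq> j"
  shows "indep_var (M' i) (Y i) (M' j) (Y j)"
proof -
  have "indep_var (\<Pi>\<^sub>M k\<in>{i}. M' k) (\<lambda>\<omega>. \<lambda>k\<in>{i}. Y k \<omega>) (\<Pi>\<^sub>M k\<in>{j}. M' k) (\<lambda>\<omega>. \<lambda>k\<in>{j}. Y k \<omega>)"
    using indep_var_restrict[OF assms(1), of "{i}" "{j}"] assms(2-4) by auto
  then have "indep_var (M' i) ((\<lambda>x. x i) \<circ> (\<lambda>\<omega>. \<lambda>k\<in>{i}. Y k \<omega>)) (M' j) ((\<lambda>x. x j) \<circ> (\<lambda>\<omega>. \<lambda>k\<in>{j}. Y k \<omega>))"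
    by (rule indep_var_compose) (auto intro: measurable_component_singleton)
  then show ?thesis by (simp add: comp_def)
qed

text \<open>By Fubini, the diagonal has measure \<open>\<integral> P(Y = x) dP\<^sub>X(x) = 0\<close>.\<close>
lemma (in prob_space) prob_eq_indep_atomless:
  fixes X Y :: "'a \<Rightarrow> real"
  assumes ind: "indep_var borel X borel Y" and atom: "\<forall>x. prob {\<omega>\<in>space M. Y \<omega> = x} = 0"
  shows "prob {\<omega>\<in>space M. X \<omega> = Y \<omega>} = 0"
proof -
  have rv: "random_variable borel X" "random_variable borel Y"
    and eq: "distr M borel X \<Otimes>\<^sub>M distr M borel Y = distr M (borel \<Otimes>\<^sub>M borel) (\<lambda>\<omega>. (X \<omega>, Y \<omega>))"
    using ind unfolding indep_var_distribution_eq by auto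
  interpret Y: prob_space "distr M borel Y" by (rule prob_space_distr[OF rv(2)])
  define D where "D = {p\<in>space (borel \<Otimes>\<^sub>M borel). fst p = (snd p :: real)}"
  have D: "D \<in> sets (borel \<Otimes>\<^sub>M borel)" unfolding D_def by measurable
  have "prob {\<omega>\<in>space M. X \<omega> = Y \<omega>} = measure (distr M (borel \<Otimes>\<^sub>M borel) (\<lambda>\<omega>. (X \<omega>, Y \<omega>))) D"
    using rv D by (subst measure_distr) (auto simp: D_def space_pair_measure intro: arg_cong[where f=prob])
  also have "\<dots> = measure (distr M borel X \<Otimes>\<^sub>M distr M borel Y) D" by (simp add: eq)
  also have "\<dots> = 0"
  proof -
    have "emeasure (distr M borel X \<Otimes>\<^sub>M distr M borel Y) D
        = (\<integral>\<^sup>+ x. emeasure (distr M borel Y) (Pair x -` D) \<partial>distr M borel X)"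
      using D by (intro Y.emeasure_pair_measure_alt) simp
    also have "\<dots> = (\<integral>\<^sup>+ x. 0 \<partial>distr M borel X)"
    proof (rule nn_integral_cong)
      fix x :: real
      have "{\<omega>\<in>space M. Y \<omega> = x} \<in> events" using rv(2) by measurable
      moreover have "Pair x -` D = {x}" by (auto simp: D_def space_pair_measure)
      ultimately show "emeasure (distr M borel Y) (Pair x -` D) = 0"
        using rv(2) atom by (simp add: emeasure_distr emeasure_eq_measure vimage_def Int_def conj_commute)
    qed
    finally show ?thesis by (simp add: measure_def)
  qed
  finally show ?thesis .
qed

lemma Iplus_empty_iff: "Iplus S c X = {} \<longleftrightarrow> (\<forall>i\<in>S-{c}. X i \<le> X c)"
  unfolding Iplus_def by force

lemma Iminus_eq_Iplus_uminus: "Iminus S c X = Iplus S c (\<lambda>i. - X i)"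
  unfolding Iminus_def Iplus_def by auto

text \<open>Up to the null event of a tie, \<open>I\<^sub>+ = {}\<close> says that \<open>c\<close> is the strict maximum among
  the exchangeable variables indexed by \<open>S\<close>; the events "\<open>j\<close> is the strict maximum" are disjoint
  and equiprobable.\<close>
lemma (in prob_space) prob_Iplus_empty_le:
  fixes Y :: "'i \<Rightarrow> 'a \<Rightarrow> real"
  assumes ind: "indep_vars (\<lambda>_. borel) Y S" and fin: "finite S" and c: "c \<in> S"
    and dist: "\<forall>i\<in>S. distr M borel (Y i) = distr M borel (Y c)"
    and atom: "\<forall>x. prob {\<omega>\<in>space M. Y c \<omega> = x} = 0"
  shows "{\<omega>\<in>space M. Iplus S c (\<lambda>i. Y i \<omega>) = {}} \<in> events"
    and "prob {\<omega>\<in>space M. Iplus S c (\<lambda>i. Y i \<omega>) = {}} \<le> 1 / card S"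
proof -
  have rv [measurable]: "Y i \<in> borel_measurable M" if "i \<in> S" for i
    using ind that unfolding indep_vars_def by auto
  define W where "W = {\<omega>\<in>space M. Iplus S c (\<lambda>i. Y i \<omega>) = {}}"
  define E where "E j = {\<omega>\<in>space M. \<forall>i\<in>S-{j}. Y i \<omega> < Y j \<omega>}" for j
  define tie where "tie i = {\<omega>\<in>space M. Y i \<omega> = Y c \<omega>}" for i
  have E: "E j \<in> events" if "j \<in> S" for j
  proof -
    have "Measurable.pred M (\<lambda>\<omega>. \<forall>i\<in>S-{j}. Y i \<omega> < Y j \<omega>)"
      using fin rv[OF that] by (intro pred_intros_finite) (auto intro: rv)
    then show ?thesis unfolding E_def by (simp add: pred_def)
  qed
  have W: "W \<in> events"
  proof -
    have "Measurable.pred M (\<lambda>\<omega>. \<forall>i\<in>S-{c}. Y i \<omega> \<le> Y c \<omega>)"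
      using fin rv[OF c] by (intro pred_intros_finite) (auto intro: rv)
    then show ?thesis unfolding W_def Iplus_empty_iff by (simp add: pred_def)
  qed
  then show "{\<omega>\<in>space M. Iplus S c (\<lambda>i. Y i \<omega>) = {}} \<in> events" by (simp add: W_def)
  have tie: "tie i \<in> events" if "i \<in> S" for i
    unfolding tie_def using rv[OF that] rv[OF c] by measurable
  have tie0: "prob (tie i) = 0" if "i \<in> S - {c}" for i
    unfolding tie_def using that c
    by (intro prob_eq_indep_atomless[OF indep_var_of_indep_vars[OF ind] atom]) auto
  have "(\<Sum>j\<in>S. prob (E j)) = prob (\<Union>j\<in>S. E j)"
    using E fin by (intro measure_finite_Union[symmetric])
      (auto simp: disjoint_family_on_def E_def dest: less_asym)
  also have "\<dots> \<le> 1" by simp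
  finally have "real (card S) * prob (E c) \<le> 1"
    using prob_strict_max_eq[OF ind fin c _ dist] by (simp add: E_def)
  moreover have "0 < card S" using fin c by (auto simp: card_gt_0_iff)
  ultimately have Ec: "prob (E c) \<le> 1 / card S" by (simp add: field_simps)
  have "W \<subseteq> E c \<union> (\<Union>i\<in>S-{c}. tie i)"
  proof
    fix \<omega> assume "\<omega> \<in> W"
    then have "\<omega> \<in> space M" "\<forall>i\<in>S-{c}. Y i \<omega> \<le> Y c \<omega>"
      unfolding W_def Iplus_empty_iff by auto
    then show "\<omega> \<in> E c \<union> (\<Union>i\<in>S-{c}. tie i)"
      unfolding E_def tie_def by (auto simp: le_less)
  qed
  then have "prob W \<le> prob (E c \<union> (\<Union>i\<in>S-{c}. tie i))"
    using E[OF c] tie fin by (intro finite_measure_mono) auto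
  also have "\<dots> \<le> prob (E c) + prob (\<Union>i\<in>S-{c}. tie i)"
    using E[OF c] tie fin by (intro measure_subadditive) auto
  also have "prob (\<Union>i\<in>S-{c}. tie i) \<le> (\<Sum>i\<in>S-{c}. prob (tie i))"
    using tie fin by (intro finite_measure_subadditive_finite) auto
  also have "(\<Sum>i\<in>S-{c}. prob (tie i)) = 0" using tie0 by simp
  finally show "prob {\<omega>\<in>space M. Iplus S c (\<lambda>i. Y i \<omega>) = {}} \<le> 1 / card S"
    using Ec by (simp add: W_def)
qed

lemma (in prob_space) prob_Iminus_empty_le:
  fixes Y :: "'i \<Rightarrow> 'a \<Rightarrow> real"
  assumes ind: "indep_vars (\<lambda>_. borel) Y S" and fin: "finite S" and c: "c \<in> S"
    and dist: "\<forall>i\<in>S. distr M borel (Y i) = distr M borel (Y c)"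
    and atom: "\<forall>x. prob {\<omega>\<in>space M. Y c \<omega> = x} = 0"
  shows "{\<omega>\<in>space M. Iminus S c (\<lambda>i. Y i \<omega>) = {}} \<in> events"
    and "prob {\<omega>\<in>space M. Iminus S c (\<lambda>i. Y i \<omega>) = {}} \<le> 1 / card S"
proof -
  have rv: "Y i \<in> borel_measurable M" if "i \<in> S" for i
    using ind that unfolding indep_vars_def by auto
  have "indep_vars (\<lambda>_. borel) (\<lambda>i \<omega>. - Y i \<omega>) S"
    using indep_vars_compose2[OF ind, of "\<lambda>_. uminus" "\<lambda>_. borel"] by simp
  moreover have "\<forall>i\<in>S. distr M borel (\<lambda>\<omega>. - Y i \<omega>) = distr M borel (\<lambda>\<omega>. - Y c \<omega>)"
  proof
    have neg: "distr (distr M borel (Y i)) borel uminus = distr M borel (\<lambda>\<omega>. - Y i \<omega>)"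
      if "i \<in> S" for i
      using distr_distr[OF borel_measurable_uminus[OF measurable_ident] rv[OF that]]
      by (simp add: comp_def)
    fix i assume "i \<in> S"
    then show "distr M borel (\<lambda>\<omega>. - Y i \<omega>) = distr M borel (\<lambda>\<omega>. - Y c \<omega>)"
      using neg[of i] neg[OF c] dist by metis
  qed
  moreover have "prob {\<omega>\<in>space M. - Y c \<omega> = x} = 0" for x
  proof -
    have "{\<omega>\<in>space M. - Y c \<omega> = x} = {\<omega>\<in>space M. Y c \<omega> = - x}" by auto
    then show ?thesis using atom by simp
  qed
  ultimately have "{\<omega>\<in>space M. Iplus S c (\<lambda>i. - Y i \<omega>) = {}} \<in> events \<and>
      prob {\<omega>\<in>space M. Iplus S c (\<lambda>i. - Y i \<omega>) = {}} \<le> 1 / card S"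
    using prob_Iplus_empty_le[OF _ fin c, of "\<lambda>i \<omega>. - Y i \<omega>"] by blast
  then show "{\<omega>\<in>space M. Iminus S c (\<lambda>i. Y i \<omega>) = {}} \<in> events"
    and "prob {\<omega>\<in>space M. Iminus S c (\<lambda>i. Y i \<omega>) = {}} \<le> 1 / card S"
    unfolding Iminus_eq_Iplus_uminus by auto
qed

lemma (in prob_space) prob_Iplus_Iminus_nonempty:
  fixes Y :: "'i \<Rightarrow> 'a \<Rightarrow> real"
  assumes "indep_vars (\<lambda>_. borel) Y S" and "finite S" and "c \<in> S"
    and "\<forall>i\<in>S. distr M borel (Y i) = distr M borel (Y c)"
    and "\<forall>x. prob {\<omega>\<in>space M. Y c \<omega> = x} = 0"
  defines "A \<equiv> {\<omega>\<in>space M. Iplus S c (\<lambda>i. Y i \<omega>) \<noteq> {} \<and> Iminus S c (\<lambda>i. Y i \<omega>) \<noteq> {}}"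
  shows "A \<in> events" and "1 - 2 / card S \<le> prob A"
proof -
  let ?Wp = "{\<omega>\<in>space M. Iplus S c (\<lambda>i. Y i \<omega>) = {}}"
  let ?Wm = "{\<omega>\<in>space M. Iminus S c (\<lambda>i. Y i \<omega>) = {}}"
  note Wp = prob_Iplus_empty_le[OF assms(1-5)] and Wm = prob_Iminus_empty_le[OF assms(1-5)]
  have A: "A = space M - (?Wp \<union> ?Wm)" unfolding A_def by auto
  then show "A \<in> events" using Wp Wm by auto
  have "prob (?Wp \<union> ?Wm) \<le> 2 / card S"
    using measure_subadditive[OF Wp(1) Wm(1)] Wp(2) Wm(2) by simp
  then show "1 - 2 / card S \<le> prob A"
    unfolding A using prob_compl[of "?Wp \<union> ?Wm"] Wp Wm by auto
qed

theorem theorem2: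
  fixes M :: "'w measure"
    and U :: "real ^ 'd::finite ^ 'v::finite"
    and r :: "real ^ 'd"
    and c :: 'v and S :: "'v set" and T :: nat
    and \<epsilon> lam re \<sigma> :: real
    and v :: "'w \<Rightarrow> real ^ 'd"
  defines "P \<equiv> softmax (U *v r)"
    and "X \<equiv> (\<lambda>i \<omega>. v \<omega> \<bullet> (U $ i))"
  assumes "prob_space M"
    and "P c < 1"
    and "c \<in> S" and "card S = T" and "T \<ge> 3"
    and "(\<Sum>i\<in>S - {c}. P i) > 0"
    and "(\<Sum>i\<in>S - {c}. P i) = (1 - \<epsilon>) * (1 - P c)"
    and "0 \<le> \<epsilon>" and "\<epsilon> < 1"
    and "re \<noteq> 0" and "lam > 0"
    and "v \<in> borel_measurable M"
    and "\<forall>\<omega>\<in>space M. norm (v \<omega>) = 1"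
    and "prob_space.indep_vars M (\<lambda>_. borel) X S"
    and "\<forall>i\<in>S. distr M borel (X i) = distr M borel (X c)"
    and "\<forall>x. measure M {\<omega> \<in> space M. X c \<omega> = x} = 0"
    and "integrable M (\<lambda>\<omega>. (X c \<omega>)\<^sup>2)"
    and "\<sigma> > 0"
    and "(\<integral>\<omega>. (X c \<omega> - (\<integral>\<omega>'. X c \<omega>' \<partial>M))\<^sup>2 \<partial>M) = \<sigma>\<^sup>2"
  shows "\<exists>A\<in>sets M. measure M A \<ge> 1 - 2 / real T \<and>
    (\<forall>\<omega>\<in>A.
       let Xw = (\<lambda>i. X i \<omega>);
           Ip = Iplus S c Xw; Im = Iminus S c Xw;
           \<alpha> = min (Pmass P Ip) (Pmass P Im) / ((1 - P c) * (1 - \<epsilon>));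
           \<beta> = min \<bar>cmean P Xw c Im\<bar> (cmean P Xw c Ip) / \<sigma>
       in Ip \<noteq> {} \<and> Im \<noteq> {} \<and> \<alpha> > 0 \<and> \<beta> > 0 \<and>
          softmax (U *v (r + (lam * \<bar>re\<bar>) *\<^sub>R v \<omega>)) c
            \<le> P c / (P c + (1 - P c) * \<alpha> * (1 - \<epsilon>) *
                       (1 + lam\<^sup>2 * \<sigma>\<^sup>2 * \<beta>\<^sup>2 / 2 * re\<^sup>2)))"
proof -
  interpret prob_space M by fact
  define A where "A = {\<omega>\<in>space M. Iplus S c (\<lambda>i. X i \<omega>) \<noteq> {} \<and> Iminus S c (\<lambda>i. X i \<omega>) \<noteq> {}}"
  have A: "A \<in> events" "1 - 2 / real T \<le> prob A"
    using prob_Iplus_Iminus_nonempty[OF assms(16) finite assms(5) assms(17,18)] assms(6)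
    unfolding A_def by auto
  show ?thesis
  proof (intro bexI[of _ A] conjI ballI A, goal_cases)
    case (1 \<omega>)
    define Xw where "Xw = (\<lambda>i. X i \<omega>)"
    define m where "m = min (Pmass P (Iplus S c Xw)) (Pmass P (Iminus S c Xw))"
    define cm where "cm = min \<bar>cmean P Xw c (Iminus S c Xw)\<bar> (cmean P Xw c (Iplus S c Xw))"
    have P: "\<forall>t. 0 < P t" unfolding P_def by (simp add: softmax_pos)
    have ne: "Iplus S c Xw \<noteq> {}" "Iminus S c Xw \<noteq> {}" using 1 by (auto simp: A_def Xw_def)
    have "0 < m" unfolding m_def using Pmass_pos[OF P] ne by simp
    moreover have "0 < cm"
      unfolding cm_def using cmean_Iplus_pos[OF P ne(1)] cmean_Iminus_neg[OF P ne(2)] by simp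
    moreover have "softmax (U *v (r + (lam * \<bar>re\<bar>) *\<^sub>R v \<omega>)) c
        \<le> P c / (P c + m * (1 + (lam * \<bar>re\<bar> * cm)\<^sup>2 / 2))"
      unfolding P_def m_def cm_def Xw_def X_def
      by (rule steered_softmax_le) (use ne assms(13) in \<open>simp_all add: Xw_def X_def\<close>)
    moreover have "(1 - P c) * (m / ((1 - P c) * (1 - \<epsilon>))) * (1 - \<epsilon>) = m"
      using assms(4,11) by (simp add: divide_simps)
    moreover have "lam\<^sup>2 * \<sigma>\<^sup>2 * (cm / \<sigma>)\<^sup>2 / 2 * re\<^sup>2 = (lam * \<bar>re\<bar> * cm)\<^sup>2 / 2"
      using assms(20) by (simp add: field_simps power_mult_distrib)
    ultimately show ?case
      using ne assms(4,11,20) unfolding Let_def Xw_def[symmetric] m_def[symmetric] cm_def[symmetric] by simp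
  qed
qed

end
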